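(* Let $V$ be a finite-dimensional real vector space with a non-degenerate inner product of signature $(p,q)$, $p,q\ge1$, $p+q\ge3$; let $Q(v)=(v,v)$ and $\mathcal{I}=Q\cdot\mathbb{R}[V,\mathbb{R}]$. Let $W$ be a finite-dimensional real vector space of dimension $w$ and $r\le w$. Let $\Delta$ be an $\mathbb{R}[V,\mathbb{R}]$-submodule of $\mathbb{R}[V,W]$ such that $Q\cdot x\in\Delta$ implies $x\in\Delta$. If there exist $x_1,\dots,x_r\in\Delta$ with $I(x_1,\dots,x_r)\ne\{0\}$, then there exist $x_1,\dots,x_r\in\Delta$ with $k(x_1,\dots,x_r)=0$, i.e. with $I(x_1,\dots,x_r)\not\subset\mathcal{I}$.
   Context: $\mathbb{R}[V,\mathbb{R}]$ is the ring of real polynomial functions on $V$ and $\mathbb{R}[V,W]$ the module of polynomial maps $V\to W$. For $x_1,\dots,x_r\in\mathbb{R}[V,W]$ and a basis of $W$, $I(x_1,\dots,x_r)$ is the ideal generated by all $r\times r$ minors of the $w\times r$ matrix whose $i$-th column is the coordinate vector of $x_i$ (independent of basis). If $I(x_1,\dots,x_r)\neq\{0\}$, $k(x_1,\dots,x_r)$ is the smallest integer $k\ge0$ with $I(x_1,\dots,x_r)\not\subset\mathcal{I}^{k+1}$. *)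

theory Defs
  imports "HOL-Analysis.Analysis" "HOL-Combinatorics.Permutations"
begin

inductive poly_fun :: "('v::real_vector \<Rightarrow> real) \<Rightarrow> bool" where
  const: "poly_fun (\<lambda>v. c)"
| lin: "linear l \<Longrightarrow> poly_fun l"
| add: "poly_fun f \<Longrightarrow> poly_fun g \<Longrightarrow> poly_fun (\<lambda>v. f v + g v)"
| mult: "poly_fun f \<Longrightarrow> poly_fun g \<Longrightarrow> poly_fun (\<lambda>v. f v * g v)"

definition poly_map :: "('v::real_vector \<Rightarrow> 'w::euclidean_space) \<Rightarrow> bool" where
  "poly_map x \<longleftrightarrow> (\<forall>b\<in>Basis. poly_fun (\<lambda>v. x v \<bullet> b))"

definition poly_submodule :: "('v::real_vector \<Rightarrow> 'w::euclidean_space) set \<Rightarrow> bool" where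
  "poly_submodule D \<longleftrightarrow> D \<subseteq> {x. poly_map x} \<and> (\<lambda>v. 0) \<in> D \<and>
     (\<forall>x\<in>D. \<forall>y\<in>D. (\<lambda>v. x v + y v) \<in> D) \<and>
     (\<forall>f x. poly_fun f \<longrightarrow> x \<in> D \<longrightarrow> (\<lambda>v. f v *\<^sub>R x v) \<in> D)"

definition ideal_gen :: "('v::real_vector \<Rightarrow> real) set \<Rightarrow> ('v \<Rightarrow> real) set" where
  "ideal_gen G = {(\<lambda>v. \<Sum>i<n. f i v * g i v) | (n::nat) f g. \<forall>i<n. poly_fun (f i) \<and> g i \<in> G}"

definition det_nat :: "nat \<Rightarrow> (nat \<Rightarrow> nat \<Rightarrow> real) \<Rightarrow> real" where
  "det_nat r M = (\<Sum>p\<in>{p. p permutes {..<r}}. of_int (sign p) * (\<Prod>i<r. M i (p i)))"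

text \<open>All r x r minors of the w x r matrix whose j-th column is the coordinate vector
  of x_j (rows chosen by an injective selection of r basis vectors of W).\<close>
definition minors :: "nat \<Rightarrow> (nat \<Rightarrow> 'v::real_vector \<Rightarrow> 'w::euclidean_space) \<Rightarrow> ('v \<Rightarrow> real) set" where
  "minors r xs = {(\<lambda>v. det_nat r (\<lambda>i j. xs j v \<bullet> \<sigma> i)) | \<sigma>.
                    inj_on \<sigma> {..<r} \<and> \<sigma> ` {..<r} \<subseteq> Basis}"

definition minor_ideal :: "nat \<Rightarrow> (nat \<Rightarrow> 'v::real_vector \<Rightarrow> 'w::euclidean_space) \<Rightarrow> ('v \<Rightarrow> real) set" where
  "minor_ideal r xs = ideal_gen (minors r xs)"

definition has_signature :: "('v::euclidean_space \<Rightarrow> 'v \<Rightarrow> real) \<Rightarrow> nat \<Rightarrow> nat \<Rightarrow> bool" where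
  "has_signature B p q \<longleftrightarrow> bilinear B \<and> (\<forall>u v. B u v = B v u) \<and> p + q = DIM('v) \<and>
     (\<exists>e::nat \<Rightarrow> 'v. inj_on e {..<p+q} \<and> independent (e ` {..<p+q}) \<and>
        span (e ` {..<p+q}) = UNIV \<and>
        (\<forall>i<p+q. \<forall>j<p+q. i \<noteq> j \<longrightarrow> B (e i) (e j) = 0) \<and>
        (\<forall>i<p. B (e i) (e i) = 1) \<and> (\<forall>i. p \<le> i \<and> i < p+q \<longrightarrow> B (e i) (e i) = -1))"

end

theory Submission
  imports Defs "Jordan_Normal_Form.Determinant"
begin

(* Q is a prime element of R[V] when p, q >= 1 and p + q >= 3.  Normalise B(e, e) = 1 and put
   l = B(-, e).  Modulo Q every polynomial is congruent to a l + b with a, b constant along e,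
   and l^2 is congruent to the discriminant S = l^2 - Q, which is constant along e as well; so
   R[V]/(Q) behaves like R[V'][l]/(l^2 - S).  Near a vector u orthogonal to e with Q(u) > 0 we
   have S < 0, and there such classes multiply like complex numbers, without zero divisors.

   Now let x_1, ..., x_r in Delta have a nonzero r-minor M = Q^k h with Q not dividing h, and
   k > 0.  Take a largest minor of the x_i not divisible by Q, of size rho < r, and add to its
   rows a row x_j not among them.  With c_0, ..., c_rho the cofactors of the last column of the
   resulting rho + 1 rows, z = sum c_i x_(tau i) lies in Delta and each coordinate of z is a
   (rho + 1)-minor, hence a multiple of Q.  Saturation gives y in Delta with Q y = z, and
   replacing x_j by y turns each r-minor m into c_rho m / Q, where c_rho is the chosen minor.
   As Q is prime and does not divide c_rho, the exponent k drops by one. *)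

no_notation Matrix.scalar_prod (infix "\<bullet>" 70)

section \<open>Polynomial functions\<close>

lemma poly_fun_cmult: "poly_fun f \<Longrightarrow> poly_fun (\<lambda>v. c * f v)"
  by (rule poly_fun.mult[OF poly_fun.const])

lemma poly_fun_uminus: "poly_fun f \<Longrightarrow> poly_fun (\<lambda>v. - f v)"
  using poly_fun_cmult[of f "-1"] by simp

lemma poly_fun_diff: "poly_fun f \<Longrightarrow> poly_fun g \<Longrightarrow> poly_fun (\<lambda>v. f v - g v)"
  using poly_fun.add[OF _ poly_fun_uminus, of f g] by simp

lemma poly_fun_sum:
  "finite S \<Longrightarrow> (\<And>i. i \<in> S \<Longrightarrow> poly_fun (f i)) \<Longrightarrow> poly_fun (\<lambda>v. \<Sum>i\<in>S. f i v)"
  by (induction S rule: finite_induct) (auto intro: poly_fun.const poly_fun.add)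

lemma poly_fun_prod:
  "finite S \<Longrightarrow> (\<And>i. i \<in> S \<Longrightarrow> poly_fun (f i)) \<Longrightarrow> poly_fun (\<lambda>v. \<Prod>i\<in>S. f i v)"
  by (induction S rule: finite_induct) (auto intro: poly_fun.const poly_fun.mult)

lemma poly_fun_power: "poly_fun f \<Longrightarrow> poly_fun (\<lambda>v. f v ^ n)"
  by (induction n) (auto intro: poly_fun.const poly_fun.mult)

lemma poly_fun_inner_left: "poly_fun (\<lambda>v. v \<bullet> b)"
  by (rule poly_fun.lin) (rule bounded_linear_inner_left[THEN bounded_linear.linear])

lemma poly_map_inner:
  assumes "poly_map (x :: 'v::real_vector \<Rightarrow> 'w::euclidean_space)"
  shows "poly_fun (\<lambda>v. x v \<bullet> w)"
proof -
  have "poly_fun (\<lambda>v. (x v \<bullet> b) * (w \<bullet> b))" if "b \<in> Basis" for b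
    using assms that unfolding poly_map_def by (intro poly_fun.mult poly_fun.const) auto
  then have "poly_fun (\<lambda>v. \<Sum>b\<in>Basis. (x v \<bullet> b) * (w \<bullet> b))" by (intro poly_fun_sum) auto
  moreover have "x v \<bullet> w = (\<Sum>b\<in>Basis. (x v \<bullet> b) * (w \<bullet> b))" for v
    by (rule euclidean_inner)
  ultimately show ?thesis by simp
qed

lemma poly_fun_on_line:
  assumes "poly_fun f"
  shows "\<exists>P. \<forall>t. f (x + t *\<^sub>R d) = poly P t"
  using assms
proof (induction f)
  case (const c)
  show ?case by (rule exI[of _ "[:c:]"]) simp
next
  case (lin l)
  show ?case
    by (rule exI[of _ "[:l x, l d:]"]) (simp add: linear_add[OF lin] linear_scale[OF lin])
next
  case (add f g)
  then obtain P R where "\<forall>t. f (x + t *\<^sub>R d) = poly P t" "\<forall>t. g (x + t *\<^sub>R d) = poly R t"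
    by blast
  then show ?case by (intro exI[of _ "P + R"]) simp
next
  case (mult f g)
  then obtain P R where "\<forall>t. f (x + t *\<^sub>R d) = poly P t" "\<forall>t. g (x + t *\<^sub>R d) = poly R t"
    by blast
  then show ?case by (intro exI[of _ "P * R"]) simp
qed

lemma poly_fun_continuous:
  fixes f :: "'v::euclidean_space \<Rightarrow> real"
  assumes "poly_fun f"
  shows "continuous_on UNIV f"
  using assms
proof (induction f)
  case (lin l)
  then show ?case by (simp add: linear_continuous_on linear_conv_bounded_linear)
qed (auto intro: continuous_intros)

lemma poly_fun_eq_0_on_open:
  fixes f :: "'v::euclidean_space \<Rightarrow> real"
  assumes f: "poly_fun f" and U: "open U" "x \<in> U" and zero: "\<And>u. u \<in> U \<Longrightarrow> f u = 0"
  shows "f y = 0"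
proof -
  obtain e where e: "e > 0" "ball x e \<subseteq> U" using U open_contains_ball by blast
  obtain P where P: "\<And>t. f (x + t *\<^sub>R (y - x)) = poly P t" using poly_fun_on_line[OF f] by blast
  have n: "norm (y - x) + 1 > 0" by (simp add: add_nonneg_pos)
  define c where "c = e / (norm (y - x) + 1)"
  have c: "c > 0" unfolding c_def using e(1) n by simp
  have "{0<..<c} \<subseteq> {t. poly P t = 0}"
  proof
    fix t assume t: "t \<in> {0<..<c}"
    have "norm (t *\<^sub>R (y - x)) \<le> t * (norm (y - x) + 1)" using t by simp
    also have "\<dots> < c * (norm (y - x) + 1)"
      using t n by (intro mult_strict_right_mono) auto
    also have "\<dots> = e" unfolding c_def using n by simp
    finally have "x + t *\<^sub>R (y - x) \<in> U" using e(2) by (auto simp: dist_norm)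
    then show "t \<in> {t. poly P t = 0}" using zero P by (metis mem_Collect_eq)
  qed
  then have "infinite {t. poly P t = 0}" using c finite_subset infinite_Ioo by blast
  then have "P = 0" using poly_roots_finite by blast
  then show ?thesis using P[of 1] by simp
qed

lemma poly_fun_mult_eq_0:
  fixes f :: "'v::euclidean_space \<Rightarrow> real"
  assumes f: "poly_fun f" and g: "poly_fun g" and fg: "\<And>x. f x * g x = 0"
  shows "(\<forall>x. f x = 0) \<or> (\<forall>x. g x = 0)"
proof (rule ccontr)
  assume "\<not> ?thesis"
  then obtain x y where "f x \<noteq> 0" "g y \<noteq> 0" by blast
  have "open {x. f x \<noteq> 0}"
    using poly_fun_continuous[OF f] open_Collect_neq[of f "\<lambda>_. 0"]
    by (simp add: continuous_on_eq_continuous_at)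
  then have "g y = 0"
    by (rule poly_fun_eq_0_on_open[OF g]) (use \<open>f x \<noteq> 0\<close> fg in \<open>auto simp: mult_eq_0_iff\<close>)
  with \<open>g y \<noteq> 0\<close> show False by simp
qed

lemma poly_fun_mult_left_cancel:
  fixes c :: "'v::euclidean_space \<Rightarrow> real"
  assumes "poly_fun c" "c u \<noteq> 0" "poly_fun f" "poly_fun g" "\<And>v. c v * f v = c v * g v"
  shows "f = g"
proof -
  have "(\<forall>v. c v = 0) \<or> (\<forall>v. f v - g v = 0)"
    using assms by (intro poly_fun_mult_eq_0 poly_fun_diff) (auto simp: right_diff_distrib)
  then show ?thesis using \<open>c u \<noteq> 0\<close> by auto
qed

definition poly_dvd :: "('v::real_vector \<Rightarrow> real) \<Rightarrow> ('v \<Rightarrow> real) \<Rightarrow> bool" where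
  "poly_dvd Q f \<longleftrightarrow> (\<exists>h. poly_fun h \<and> (\<forall>v. f v = Q v * h v))"

lemma poly_dvd_zero: "poly_dvd Q (\<lambda>v. 0)"
  unfolding poly_dvd_def by (auto intro!: exI[of _ "\<lambda>v. 0"] poly_fun.const)

lemma poly_dvd_mult_left:
  assumes "poly_dvd Q f" "poly_fun g"
  shows "poly_dvd Q (\<lambda>v. g v * f v)"
proof -
  obtain h where "poly_fun h" "\<forall>v. f v = Q v * h v" using assms(1) unfolding poly_dvd_def by blast
  then show ?thesis unfolding poly_dvd_def using assms(2)
    by (intro exI[of _ "\<lambda>v. g v * h v"]) (auto intro: poly_fun.mult)
qed

lemma poly_dvd_uminus_iff: "poly_dvd (\<lambda>v. - Q v) f \<longleftrightarrow> poly_dvd Q f"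
proof -
  have "poly_dvd Q f" if dvd: "poly_dvd (\<lambda>v. - Q v) f" for Q
  proof -
    obtain h where "poly_fun h" "\<forall>v. f v = - Q v * h v" using dvd unfolding poly_dvd_def by blast
    then show ?thesis unfolding poly_dvd_def
      by (intro exI[of _ "\<lambda>v. - h v"]) (auto intro: poly_fun_uminus)
  qed
  from this[of Q] this[of "\<lambda>v. - Q v"] show ?thesis by auto
qed

definition poly_prime :: "('v::real_vector \<Rightarrow> real) \<Rightarrow> bool" where
  "poly_prime Q \<longleftrightarrow> poly_fun Q \<and> (\<exists>u. Q u \<noteq> 0) \<and> \<not> poly_dvd Q (\<lambda>v. 1) \<and>
     (\<forall>f g. poly_fun f \<longrightarrow> poly_fun g \<longrightarrow> poly_dvd Q (\<lambda>v. f v * g v) \<longrightarrow>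
        poly_dvd Q f \<or> poly_dvd Q g)"

lemma poly_prime_uminus:
  assumes "poly_prime (\<lambda>v. - Q v)"
  shows "poly_prime Q"
proof -
  have "poly_fun Q" using poly_fun_uminus[of "\<lambda>v. - Q v"] assms unfolding poly_prime_def by simp
  then show ?thesis using assms unfolding poly_prime_def poly_dvd_uminus_iff by simp
qed

section \<open>The quadratic form is a prime element\<close>

lemma poly_fun_quadratic_form:
  fixes B :: "'v::euclidean_space \<Rightarrow> 'v \<Rightarrow> real"
  assumes "bilinear B"
  shows "poly_fun (\<lambda>v. B v v)"
proof -
  have "B v v = (\<Sum>b\<in>Basis. (v \<bullet> b) * B b v)" for v
    using assms linear_sum[of "\<lambda>x. B x v" "\<lambda>b. (v \<bullet> b) *\<^sub>R b" Basis]
    by (simp add: bilinear_def euclidean_representation bilinear_lmul[OF assms])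
  moreover have "poly_fun (\<lambda>v. \<Sum>b\<in>Basis. (v \<bullet> b) * B b v)"
    using assms unfolding bilinear_def
    by (intro poly_fun_sum poly_fun.mult poly_fun_inner_left poly_fun.lin) auto
  ultimately show ?thesis by simp
qed

lemma bilinear_uminus: "bilinear B \<Longrightarrow> bilinear (\<lambda>u v. - B u v)"
  unfolding bilinear_def by (auto intro: linear_compose_neg)

definition invariant_along :: "'v::real_vector \<Rightarrow> ('v \<Rightarrow> real) \<Rightarrow> bool" where
  "invariant_along e g \<longleftrightarrow> (\<forall>v t. g (v + t *\<^sub>R e) = g v)"

text \<open>f \<equiv> a \<lambda> + b (mod Q) with \<lambda> = B(-, e) and a, b constant along e: the normal form
  of f in R[V]/(Q).\<close>
definition quadratic_split ::
  "('v::real_vector \<Rightarrow> 'v \<Rightarrow> real) \<Rightarrow> 'v \<Rightarrow> ('v \<Rightarrow> real) \<Rightarrow>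
     ('v \<Rightarrow> real) \<Rightarrow> ('v \<Rightarrow> real) \<Rightarrow> ('v \<Rightarrow> real) \<Rightarrow> bool" where
  "quadratic_split B e f h a b \<longleftrightarrow> poly_fun h \<and> poly_fun a \<and> poly_fun b \<and>
     invariant_along e a \<and> invariant_along e b \<and> (\<forall>v. f v = B v v * h v + a v * B v e + b v)"

text \<open>(a x + b) (c x + d) = 0 in R[x]/(x^2 - S), which is a field for S < 0.\<close>
lemma real_quadratic_ext_mult_eq_0:
  fixes a b c d S :: real
  assumes "S < 0" "a * d + b * c = 0" "b * d + a * c * S = 0"
  shows "(a = 0 \<and> b = 0) \<or> (c = 0 \<and> d = 0)"
proof -
  have norm_eq_0: "x^2 - S * y^2 = 0 \<longleftrightarrow> x = 0 \<and> y = 0" for x y :: real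
  proof -
    have "x^2 \<ge> 0" "- S * y^2 \<ge> 0" using \<open>S < 0\<close> by (simp_all add: mult_nonpos_nonneg)
    then show ?thesis
      using \<open>S < 0\<close> by (auto simp: add_nonneg_eq_0_iff[of "x^2" "- S * y^2", simplified])
  qed
  have "(b^2 - S * a^2) * (d^2 - S * c^2) = (b * d + a * c * S)^2 - S * (a * d + b * c)^2"
    by (simp add: power2_eq_square algebra_simps)
  also have "\<dots> = 0" using assms(2,3) by simp
  finally show ?thesis unfolding mult_eq_0_iff norm_eq_0 by blast
qed

context
  fixes B :: "'v::euclidean_space \<Rightarrow> 'v \<Rightarrow> real" and e :: 'v
  assumes bil: "bilinear B" and sym: "\<And>u v. B u v = B v u" and unit: "B e e = 1"
begin

lemma form_translate: "B (v + t *\<^sub>R e) e = B v e + t"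
  using unit by (simp add: bilinear_ladd[OF bil] bilinear_lmul[OF bil])

lemma quadratic_form_translate: "B (v + t *\<^sub>R e) (v + t *\<^sub>R e) = B v v + 2 * t * B v e + t^2"
  using unit sym[of e v]
  by (simp add: bilinear_ladd[OF bil] bilinear_radd[OF bil] bilinear_lmul[OF bil]
      bilinear_rmul[OF bil] power2_eq_square algebra_simps)

text \<open>(B v e)^2 - B v v is the reduced discriminant of t \<mapsto> Q (v + t e).\<close>
lemma invariant_along_discriminant: "invariant_along e (\<lambda>v. (B v e)^2 - B v v)"
  unfolding invariant_along_def form_translate quadratic_form_translate
  by (simp add: power2_eq_square algebra_simps)

lemma poly_fun_form_unit: "poly_fun (\<lambda>v. B v e)"
  using bil unfolding bilinear_def by (blast intro: poly_fun.lin)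

lemma poly_fun_discriminant: "poly_fun (\<lambda>v. (B v e)^2 - B v v)"
  by (intro poly_fun_diff poly_fun_power poly_fun_quadratic_form[OF bil] poly_fun_form_unit)

lemma quadratic_split_mult:
  assumes f: "quadratic_split B e f h1 a1 b1" and g: "quadratic_split B e g h2 a2 b2"
    and "poly_fun g"
  shows "quadratic_split B e (\<lambda>v. f v * g v)
    (\<lambda>v. h1 v * g v + (a1 v * B v e + b1 v) * h2 v + a1 v * a2 v)
    (\<lambda>v. a1 v * b2 v + b1 v * a2 v)
    (\<lambda>v. b1 v * b2 v + a1 v * a2 v * ((B v e)^2 - B v v))"
proof -
  have "f v * g v = B v v * (h1 v * g v + (a1 v * B v e + b1 v) * h2 v + a1 v * a2 v)
     + (a1 v * b2 v + b1 v * a2 v) * B v e + (b1 v * b2 v + a1 v * a2 v * ((B v e)^2 - B v v))"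
    for v
  proof -
    have "f v = B v v * h1 v + a1 v * B v e + b1 v" "g v = B v v * h2 v + a2 v * B v e + b2 v"
      using f g unfolding quadratic_split_def by auto
    then show ?thesis by (simp add: algebra_simps power2_eq_square)
  qed
  with assms invariant_along_discriminant poly_fun_discriminant poly_fun_form_unit
    poly_fun_quadratic_form[OF bil] show ?thesis
    unfolding quadratic_split_def invariant_along_def
    by (auto intro!: poly_fun.add poly_fun.mult)
qed

lemma exists_quadratic_split:
  assumes "poly_fun f"
  shows "\<exists>h a b. quadratic_split B e f h a b"
  using assms
proof (induction f)
  case (const c)
  have "quadratic_split B e (\<lambda>v. c) (\<lambda>v. 0) (\<lambda>v. 0) (\<lambda>v. c)"
    unfolding quadratic_split_def invariant_along_def by (auto intro: poly_fun.const)
  then show ?case by blast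
next
  case (lin l)
  have "l (v + t *\<^sub>R e) = l v + t * l e" for v t
    using linear_add[OF lin] linear_scale[OF lin] by simp
  then have "invariant_along e (\<lambda>v. l v - l e * B v e)"
    unfolding invariant_along_def form_translate by (simp add: algebra_simps)
  moreover have "linear (\<lambda>v. l v - l e * B v e)"
    unfolding linear_iff
    by (simp add: linear_add[OF lin] linear_scale[OF lin] bilinear_ladd[OF bil]
        bilinear_lmul[OF bil] algebra_simps)
  ultimately have "quadratic_split B e l (\<lambda>v. 0) (\<lambda>v. l e) (\<lambda>v. l v - l e * B v e)"
    unfolding quadratic_split_def invariant_along_def by (auto intro: poly_fun.const poly_fun.lin)
  then show ?case by blast
next
  case (add f g)
  then obtain h1 a1 b1 h2 a2 b2 where
    "quadratic_split B e f h1 a1 b1" "quadratic_split B e g h2 a2 b2" by blast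
  then have "quadratic_split B e (\<lambda>v. f v + g v)
      (\<lambda>v. h1 v + h2 v) (\<lambda>v. a1 v + a2 v) (\<lambda>v. b1 v + b2 v)"
    unfolding quadratic_split_def invariant_along_def
    by (auto intro: poly_fun.add simp: algebra_simps)
  then show ?case by blast
next
  case (mult f g)
  then obtain h1 a1 b1 h2 a2 b2 where
    "quadratic_split B e f h1 a1 b1" "quadratic_split B e g h2 a2 b2" by blast
  then show ?case using quadratic_split_mult mult.hyps(2) by blast
qed

lemma quadratic_split_0_unique:
  assumes "quadratic_split B e (\<lambda>v. 0) h a b"
  shows "a v = 0 \<and> b v = 0"
proof -
  have h: "poly_fun h" and inv: "invariant_along e a" "invariant_along e b"
    and eq: "\<And>v. B v v * h v + a v * B v e + b v = 0"
    using assms unfolding quadratic_split_def by auto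
  obtain P where P: "\<And>t. h (v + t *\<^sub>R e) = poly P t" using poly_fun_on_line[OF h] by blast
  define R where "R = [:B v v, 2 * B v e, 1:] * P + [:a v * B v e + b v, a v:]"
  have "poly R t = 0" for t
    using eq[of "v + t *\<^sub>R e"] inv P[of t]
    unfolding R_def invariant_along_def quadratic_form_translate form_translate
    by (simp add: power2_eq_square algebra_simps)
  then have R: "R = 0" using poly_all_0_iff_0 by blast
  have "P = 0"
  proof (rule ccontr)
    assume "P \<noteq> 0"
    then have "degree ([:B v v, 2 * B v e, 1:] * P) \<ge> 2"
      using degree_mult_eq[of "[:B v v, 2 * B v e, 1:]" P] by simp
    moreover have "degree [:a v * B v e + b v, a v:] \<le> 1" by simp
    moreover have "[:B v v, 2 * B v e, 1:] * P = - [:a v * B v e + b v, a v:]"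
      using R unfolding R_def by (simp only: eq_neg_iff_add_eq_0)
    ultimately show False by (metis degree_minus le_trans numeral_le_one_iff semiring_norm(69))
  qed
  then show ?thesis using R unfolding R_def by auto
qed

lemma poly_dvd_iff_quadratic_split:
  assumes split: "quadratic_split B e f h a b"
  shows "poly_dvd (\<lambda>v. B v v) f \<longleftrightarrow> (\<forall>v. a v = 0 \<and> b v = 0)"
proof
  assume "poly_dvd (\<lambda>v. B v v) f"
  then obtain h' where "poly_fun h'" "\<forall>v. f v = B v v * h' v" unfolding poly_dvd_def by blast
  then have "quadratic_split B e (\<lambda>v. 0) (\<lambda>v. h v - h' v) a b"
    using split unfolding quadratic_split_def by (auto intro: poly_fun_diff simp: algebra_simps)
  then show "\<forall>v. a v = 0 \<and> b v = 0" using quadratic_split_0_unique by blast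
next
  assume "\<forall>v. a v = 0 \<and> b v = 0"
  then show "poly_dvd (\<lambda>v. B v v) f" using split unfolding quadratic_split_def poly_dvd_def by auto
qed

text \<open>Normal forms multiply as in R[\<lambda>]/(\<lambda>^2 - S), with S the discriminant below.
  Where S < 0 this ring is \<complex>, so one factor has vanishing normal form on the open set
  {S < 0}, which contains u, and therefore everywhere.\<close>
lemma poly_dvd_quadratic_form_mult:
  assumes u: "B u e = 0" "B u u > 0" and f: "poly_fun f" and g: "poly_fun g"
    and fg: "poly_dvd (\<lambda>v. B v v) (\<lambda>v. f v * g v)"
  shows "poly_dvd (\<lambda>v. B v v) f \<or> poly_dvd (\<lambda>v. B v v) g"
proof -
  obtain h1 a1 b1 where f_split: "quadratic_split B e f h1 a1 b1"
    using exists_quadratic_split[OF f] by blast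
  obtain h2 a2 b2 where g_split: "quadratic_split B e g h2 a2 b2"
    using exists_quadratic_split[OF g] by blast
  define S where "S v = (B v e)^2 - B v v" for v
  have "\<forall>v. a1 v * b2 v + b1 v * a2 v = 0 \<and> b1 v * b2 v + a1 v * a2 v * S v = 0"
    using poly_dvd_iff_quadratic_split[OF quadratic_split_mult[OF f_split g_split g]] fg
    unfolding S_def by blast
  then have zero_where_neg: "(a1 v = 0 \<and> b1 v = 0) \<or> (a2 v = 0 \<and> b2 v = 0)" if "S v < 0" for v
    using real_quadratic_ext_mult_eq_0[OF that] by blast
  define N1 where "N1 v = a1 v ^ 2 + b1 v ^ 2" for v
  define N2 where "N2 v = a2 v ^ 2 + b2 v ^ 2" for v
  have N: "poly_fun N1" "poly_fun N2"
    using f_split g_split unfolding N1_def N2_def quadratic_split_def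
    by (simp_all add: poly_fun.add poly_fun_power)
  have "continuous_on UNIV S"
    using poly_fun_continuous[OF poly_fun_discriminant] unfolding S_def .
  then have "open {v. S v < 0}" using open_Collect_less[OF _ continuous_on_const] by blast
  moreover have "S u < 0" using u unfolding S_def by simp
  moreover have "N1 v * N2 v = 0" if "S v < 0" for v
    using zero_where_neg[OF that] unfolding N1_def N2_def by auto
  ultimately have "N1 v * N2 v = 0" for v
    using poly_fun_eq_0_on_open[OF poly_fun.mult[OF N], of "{v. S v < 0}" u] by blast
  then have "(\<forall>v. N1 v = 0) \<or> (\<forall>v. N2 v = 0)" using poly_fun_mult_eq_0[OF N] by blast
  then show ?thesis
    unfolding N1_def N2_def sum_power2_eq_zero_iff poly_dvd_iff_quadratic_split[OF f_split]
      poly_dvd_iff_quadratic_split[OF g_split] .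
qed

lemma poly_prime_quadratic_form_pos:
  assumes "B u e = 0" "B u u > 0"
  shows "poly_prime (\<lambda>v. B v v)"
  unfolding poly_prime_def
proof (intro conjI allI impI)
  show "poly_fun (\<lambda>v. B v v)" by (rule poly_fun_quadratic_form[OF bil])
  show "\<exists>u. B u u \<noteq> 0" using unit by (intro exI[of _ e]) simp
  show "\<not> poly_dvd (\<lambda>v. B v v) (\<lambda>v. 1)"
    unfolding poly_dvd_def using bilinear_lzero[OF bil, of 0] by (metis mult_zero_left zero_neq_one)
  fix f g
  assume "poly_fun f" "poly_fun g" "poly_dvd (\<lambda>v. B v v) (\<lambda>v. f v * g v)"
  then show "poly_dvd (\<lambda>v. B v v) f \<or> poly_dvd (\<lambda>v. B v v) g"
    by (rule poly_dvd_quadratic_form_mult[OF assms])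
qed

lemma exists_quadratic_form_power_factor:
  assumes M: "poly_fun M" and v0: "M v0 \<noteq> 0"
  shows "\<exists>k h. poly_fun h \<and> \<not> poly_dvd (\<lambda>v. B v v) h \<and> (\<forall>v. M v = (B v v)^k * h v)"
proof -
  obtain P where P: "\<And>t. M (v0 + t *\<^sub>R e) = poly P t" using poly_fun_on_line[OF M] by blast
  have "P \<noteq> 0" using P[of 0] v0 by auto
  define Qp where "Qp = [:B v0 v0, 2 * B v0 e, 1:]"
  have Qp: "B (v0 + t *\<^sub>R e) (v0 + t *\<^sub>R e) = poly Qp t" for t
    unfolding quadratic_form_translate Qp_def by (simp add: power2_eq_square algebra_simps)
  define K where "K = {k. \<exists>h. poly_fun h \<and> (\<forall>v. M v = (B v v)^k * h v)}"
  have bound: "2 * k \<le> degree P" if "k \<in> K" for k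
  proof -
    obtain h where h: "poly_fun h" "\<forall>v. M v = (B v v)^k * h v" using \<open>k \<in> K\<close> K_def by blast
    obtain H where H: "\<And>t. h (v0 + t *\<^sub>R e) = poly H t" using poly_fun_on_line[OF h(1)] by blast
    have "poly P = poly (Qp^k * H)"
      using P h(2) H Qp by (simp add: fun_eq_iff)
    then have PQ: "P = Qp^k * H" by (simp add: poly_eq_poly_eq_iff)
    with \<open>P \<noteq> 0\<close> have "degree P = k * 2 + degree H"
      by (simp add: Qp_def degree_mult_eq degree_power_eq)
    then show ?thesis by simp
  qed
  have "0 \<in> K" unfolding K_def using M by auto
  have "K \<subseteq> {..degree P}" using bound by fastforce
  then have "finite K" by (rule finite_subset) simp
  define k where "k = Max K"
  have "k \<in> K" unfolding k_def using \<open>finite K\<close> \<open>0 \<in> K\<close> by (intro Max_in) auto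
  then obtain h where h: "poly_fun h" "\<forall>v. M v = (B v v)^k * h v" using K_def by blast
  have "\<not> poly_dvd (\<lambda>v. B v v) h"
  proof
    assume "poly_dvd (\<lambda>v. B v v) h"
    then obtain h' where "poly_fun h'" "\<forall>v. h v = B v v * h' v" unfolding poly_dvd_def by blast
    then have "Suc k \<in> K" unfolding K_def using h(2) by (auto intro!: exI[of _ h'])
    then show False using \<open>finite K\<close> k_def by (metis Max_ge Suc_n_not_le_n)
  qed
  then show ?thesis using h by blast
qed

end

text \<open>p + q \<ge> 3 provides two orthogonal vectors on which Q has the same sign: one serves as e,
  the other as u.\<close>
lemma poly_prime_quadratic_form:
  fixes B :: "'v::euclidean_space \<Rightarrow> 'v \<Rightarrow> real"
  assumes sig: "has_signature B p q" and "1 \<le> p" "1 \<le> q" "3 \<le> p + q"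
  shows "poly_prime (\<lambda>v. B v v)"
proof -
  have bil: "bilinear B" and sym: "\<And>u v. B u v = B v u"
    using sig unfolding has_signature_def by auto
  obtain e :: "nat \<Rightarrow> 'v" where
    orth: "\<forall>i<p+q. \<forall>j<p+q. i \<noteq> j \<longrightarrow> B (e i) (e j) = 0" and
    pos: "\<forall>i<p. B (e i) (e i) = 1" and neg: "\<forall>i. p \<le> i \<and> i < p+q \<longrightarrow> B (e i) (e i) = -1"
    using sig unfolding has_signature_def by (elim conjE exE) auto
  show ?thesis
  proof (cases "2 \<le> p")
    case True
    have "B (e 0) (e 0) = 1" "B (e 1) (e 0) = 0" "B (e 1) (e 1) > 0"
      using pos[rule_format, of 0] pos[rule_format, of 1] orth[rule_format, of 1 0] True by simp_all
    then show ?thesis using poly_prime_quadratic_form_pos[OF bil sym] by blast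
  next
    case False
    then have "p = 1" using \<open>1 \<le> p\<close> by simp
    then have "- B (e 1) (e 1) = 1" "- B (e 2) (e 1) = 0" "- B (e 2) (e 2) > 0"
      using neg[rule_format, of 1] neg[rule_format, of 2] orth[rule_format, of 2 1] assms(3,4)
      by simp_all
    moreover have "\<And>u v. - B u v = - B v u" using sym by simp
    ultimately have "poly_prime (\<lambda>v. - B v v)"
      using poly_prime_quadratic_form_pos[OF bilinear_uminus[OF bil]] by blast
    then show ?thesis by (rule poly_prime_uminus)
  qed
qed

section \<open>Minors\<close>

definition selection :: "nat \<Rightarrow> 'a set \<Rightarrow> (nat \<Rightarrow> 'a) \<Rightarrow> bool" where
  "selection m A \<sigma> \<longleftrightarrow> inj_on \<sigma> {..<m} \<and> \<sigma> ` {..<m} \<subseteq> A"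

lemma exists_lessThan_notin_image:
  fixes m n :: nat
  assumes "m < n"
  shows "\<exists>j<n. j \<notin> f ` {..<m}"
proof (rule ccontr)
  assume "\<not> ?thesis"
  then have "card {..<n} \<le> card (f ` {..<m})" by (intro card_mono) auto
  also have "\<dots> \<le> m" using card_image_le[of "{..<m}" f] by simp
  finally show False using assms by simp
qed

lemma selection_Suc_upd:
  assumes "selection n A \<sigma>" "b \<in> A" "b \<notin> \<sigma> ` {..<n}"
  shows "selection (Suc n) A (\<sigma>(n := b))"
proof -
  have "(\<sigma>(n := b)) ` {..<n} = \<sigma> ` {..<n}" by (intro image_cong) auto
  moreover have "inj_on (\<sigma>(n := b)) {..<n} \<longleftrightarrow> inj_on \<sigma> {..<n}" by (intro inj_on_cong) auto
  ultimately show ?thesis using assms unfolding selection_def lessThan_Suc by auto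
qed

definition coord_mat ::
  "nat \<Rightarrow> (nat \<Rightarrow> 'v \<Rightarrow> 'w::euclidean_space) \<Rightarrow> (nat \<Rightarrow> 'w) \<Rightarrow> 'v \<Rightarrow> real mat"
  where "coord_mat m xs \<sigma> v = mat m m (\<lambda>(k, i). xs k v \<bullet> \<sigma> i)"

lemma coord_mat_carrier [simp]: "coord_mat m xs \<sigma> v \<in> carrier_mat m m"
  unfolding coord_mat_def by simp

lemma coord_mat_index [simp]:
  "k < m \<Longrightarrow> i < m \<Longrightarrow> coord_mat m xs \<sigma> v $$ (k, i) = xs k v \<bullet> \<sigma> i"
  unfolding coord_mat_def by simp

lemma det_nat_eq_det_coord_mat: "det_nat r (\<lambda>i k. xs k v \<bullet> \<sigma> i) = det (coord_mat r xs \<sigma> v)"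
proof -
  let ?A = "mat r r (\<lambda>(i, k). xs k v \<bullet> \<sigma> i)"
  have "det_nat r (\<lambda>i k. xs k v \<bullet> \<sigma> i) = det ?A"
    unfolding det_nat_def det_def'[OF mat_carrier]
    by (intro sum.cong) (auto simp: atLeast0LessThan permutes_def intro!: prod.cong)
  also have "\<dots> = det (transpose_mat ?A)" using det_transpose[of ?A r] by simp
  also have "transpose_mat ?A = coord_mat r xs \<sigma> v" unfolding coord_mat_def by (intro eq_matI) auto
  finally show ?thesis .
qed

lemma poly_fun_det:
  assumes "\<And>i j. i < n \<Longrightarrow> j < n \<Longrightarrow> poly_fun (\<lambda>v. E v i j)"
  shows "poly_fun (\<lambda>v. det (mat n n (\<lambda>(i, j). E v i j)))"
proof -
  have "det (mat n n (\<lambda>(i, j). E v i j)) =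
     (\<Sum>p\<in>{p. p permutes {0..<n}}. of_int (sign p) * (\<Prod>i\<in>{0..<n}. E v i (p i)))" for v
    unfolding det_def'[OF mat_carrier]
    by (intro sum.cong refl arg_cong2[where f="(*)"] prod.cong) (auto simp: permutes_in_image)
  moreover have "poly_fun (\<lambda>v. \<Sum>p\<in>{p. p permutes {0..<n}}.
      of_int (sign p) * (\<Prod>i\<in>{0..<n}. E v i (p i)))"
    using assms
    by (intro poly_fun_sum poly_fun_cmult poly_fun_prod) (auto simp: finite_permutations permutes_in_image)
  ultimately show ?thesis by simp
qed

lemma poly_fun_det_coord_mat:
  "(\<And>k. k < m \<Longrightarrow> poly_map (xs k)) \<Longrightarrow> poly_fun (\<lambda>v. det (coord_mat m xs \<sigma> v))"
  unfolding coord_mat_def by (intro poly_fun_det) (auto intro: poly_map_inner)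

lemma cofactor_mat_Suc:
  "cofactor (mat (Suc n) (Suc n) f) k l = (-1)^(k + l) *
     det (mat n n (\<lambda>(a, b). f (if a < k then a else Suc a, if b < l then b else Suc b)))"
  unfolding cofactor_def mat_delete_def
  by (intro arg_cong2[where f="(*)"] refl arg_cong[where f=det] eq_matI) auto

lemma poly_fun_cofactor_coord_mat:
  assumes "\<And>k. k < Suc n \<Longrightarrow> poly_map (xs k)"
  shows "poly_fun (\<lambda>v. cofactor (coord_mat (Suc n) xs \<sigma> v) k l)"
  unfolding coord_mat_def cofactor_mat_Suc
  by (intro poly_fun_cmult poly_fun_det) (auto intro!: poly_map_inner assms)

lemma cofactor_eq_if_eq_off_row:
  assumes "A \<in> carrier_mat n n" "A' \<in> carrier_mat n n"
    and "\<And>a b. a < n \<Longrightarrow> b < n \<Longrightarrow> a \<noteq> j \<Longrightarrow> A $$ (a, b) = A' $$ (a, b)"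
  shows "cofactor A j i = cofactor A' j i"
  unfolding cofactor_def mat_delete_def using assms
  by (intro arg_cong2[where f="(*)"] refl arg_cong[where f=det] eq_matI) auto

lemma cofactor_eq_if_eq_off_col:
  assumes "A \<in> carrier_mat n n" "A' \<in> carrier_mat n n"
    and "\<And>a b. a < n \<Longrightarrow> b < n \<Longrightarrow> b \<noteq> j \<Longrightarrow> A $$ (a, b) = A' $$ (a, b)"
  shows "cofactor A i j = cofactor A' i j"
  unfolding cofactor_def mat_delete_def using assms
  by (intro arg_cong2[where f="(*)"] refl arg_cong[where f=det] eq_matI) auto

lemma det_coord_mat_upd_row:
  assumes "j < r"
  shows "det (coord_mat r (xs(j := w)) \<sigma> v) =
    (\<Sum>i<r. (w v \<bullet> \<sigma> i) * cofactor (coord_mat r xs \<sigma> v) j i)"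
  unfolding laplace_expansion_row[OF coord_mat_carrier assms]
  using assms by (intro sum.cong refl) (auto intro!: cofactor_eq_if_eq_off_row[where n = r])

lemma det_coord_mat_upd_scaleR:
  "j < r \<Longrightarrow> det (coord_mat r (xs(j := \<lambda>v. c v *\<^sub>R w v)) \<sigma> v) =
    c v * det (coord_mat r (xs(j := w)) \<sigma> v)"
  unfolding det_coord_mat_upd_row by (simp add: sum_distrib_left mult.assoc)

lemma det_coord_mat_upd_sum:
  "j < r \<Longrightarrow> det (coord_mat r (xs(j := \<lambda>v. \<Sum>k\<in>K. w k v)) \<sigma> v) =
    (\<Sum>k\<in>K. det (coord_mat r (xs(j := w k)) \<sigma> v))"
  unfolding det_coord_mat_upd_row by (simp add: inner_sum_left sum_distrib_right sum.swap[of _ K])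

lemma det_coord_mat_upd_repeated_row:
  assumes "j < r" "c < r" "c \<noteq> j"
  shows "det (coord_mat r (xs(j := xs c)) \<sigma> v) = 0"
  by (rule det_identical_rows[OF coord_mat_carrier assms(3) assms(2) assms(1)])
    (use assms in \<open>auto simp: coord_mat_def\<close>)

lemma det_coord_mat_upd_combination:
  assumes j: "j < r" and last: "\<tau> n = j" and others: "\<And>k. k < n \<Longrightarrow> \<tau> k < r \<and> \<tau> k \<noteq> j"
  shows "det (coord_mat r (xs(j := \<lambda>v. \<Sum>k<Suc n. c k v *\<^sub>R xs (\<tau> k) v)) \<sigma> v) =
    c n v * det (coord_mat r xs \<sigma> v)"
proof -
  have "det (coord_mat r (xs(j := \<lambda>v. \<Sum>k<Suc n. c k v *\<^sub>R xs (\<tau> k) v)) \<sigma> v) =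
      (\<Sum>k<Suc n. c k v * det (coord_mat r (xs(j := xs (\<tau> k))) \<sigma> v))"
    unfolding det_coord_mat_upd_sum[OF j] det_coord_mat_upd_scaleR[OF j] ..
  also have "\<dots> = c n v * det (coord_mat r (xs(j := xs (\<tau> n))) \<sigma> v)"
  proof -
    have "det (coord_mat r (xs(j := xs (\<tau> k))) \<sigma> v) = 0" if "k < n" for k
      using others[OF that] by (intro det_coord_mat_upd_repeated_row[OF j]) auto
    then show ?thesis by simp
  qed
  finally show ?thesis using last by simp
qed

lemma inner_sum_cofactor_column:
  "(\<Sum>k<Suc n. cofactor (coord_mat (Suc n) xs \<sigma> v) k n *\<^sub>R xs k v) \<bullet> b =
    det (coord_mat (Suc n) xs (\<sigma>(n := b)) v)"
proof -
  have "det (coord_mat (Suc n) xs (\<sigma>(n := b)) v) =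
      (\<Sum>k<Suc n. (xs k v \<bullet> b) * cofactor (coord_mat (Suc n) xs (\<sigma>(n := b)) v) k n)"
    by (rule trans[OF laplace_expansion_column[OF coord_mat_carrier, of n]]) simp_all
  also have "\<dots> = (\<Sum>k<Suc n. (xs k v \<bullet> b) * cofactor (coord_mat (Suc n) xs \<sigma> v) k n)"
    by (intro sum.cong refl arg_cong2[where f="(*)"] cofactor_eq_if_eq_off_col[where n = "Suc n"]) auto
  finally show ?thesis unfolding inner_sum_left inner_scaleR_left by (simp only: mult.commute)
qed

lemma cofactor_coord_mat_last:
  assumes "\<And>k. k < n \<Longrightarrow> ys k = xs k"
  shows "cofactor (coord_mat (Suc n) ys \<sigma> v) n n = det (coord_mat n xs \<sigma> v)"
  unfolding coord_mat_def cofactor_mat_Suc using assms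
  by (simp add: power_add[symmetric] mult_2[symmetric], intro arg_cong[where f=det] eq_matI) auto

lemma det_coord_mat_repeated_column:
  "i < n \<Longrightarrow> det (coord_mat (Suc n) xs (\<sigma>(n := \<sigma> i)) v) = 0"
  by (rule det_identical_columns[OF coord_mat_carrier, of i n]) (auto simp: coord_mat_def)

lemma det_coord_mat_permute_rows:
  assumes "selection r {..<r} \<tau>"
  obtains c where "\<And>v. det (coord_mat r (xs \<circ> \<tau>) \<sigma> v) = c * det (coord_mat r xs \<sigma> v)"
proof -
  have \<tau>: "inj_on \<tau> {..<r}" "\<And>k. k < r \<Longrightarrow> \<tau> k < r"
    using assms unfolding selection_def by auto
  define p where "p k = (if k < r then \<tau> k else k)" for k
  have "inj_on p {0..<r}" "p ` {0..<r} \<subseteq> {0..<r}"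
    using \<tau> unfolding p_def inj_on_def by auto
  then have "bij_betw p {0..<r} {0..<r}"
    by (simp add: bij_betw_def endo_inj_surj)
  then have p: "p permutes {0..<r}" by (rule bij_imp_permutes) (auto simp: p_def)
  have "det (coord_mat r (xs \<circ> \<tau>) \<sigma> v) = signof p * det (coord_mat r xs \<sigma> v)" for v
  proof -
    have "mat r r (\<lambda>(i, j). coord_mat r xs \<sigma> v $$ (p i, j)) = coord_mat r (xs \<circ> \<tau>) \<sigma> v"
      using \<tau> by (intro eq_matI) (auto simp: coord_mat_def p_def)
    then show ?thesis using det_permute_rows[OF coord_mat_carrier p] by metis
  qed
  then show thesis by (rule that)
qed

section \<open>Lowering the power of the quadratic form in a minor\<close>

lemma poly_submodule_poly_map: "poly_submodule D \<Longrightarrow> x \<in> D \<Longrightarrow> poly_map x"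
  unfolding poly_submodule_def by blast

lemma poly_submodule_sum:
  assumes D: "poly_submodule D" and "finite K"
    and "\<And>k. k \<in> K \<Longrightarrow> poly_fun (c k)" and "\<And>k. k \<in> K \<Longrightarrow> x k \<in> D"
  shows "(\<lambda>v. \<Sum>k\<in>K. c k v *\<^sub>R x k v) \<in> D"
  using assms(2-)
proof (induction K rule: finite_induct)
  case empty
  then show ?case using D unfolding poly_submodule_def by simp
next
  case (insert a K)
  then have "(\<lambda>v. c a v *\<^sub>R x a v) \<in> D" "(\<lambda>v. \<Sum>k\<in>K. c k v *\<^sub>R x k v) \<in> D"
    using D unfolding poly_submodule_def by auto
  then show ?case using D insert.hyps unfolding poly_submodule_def by simp
qed

lemma saturated_divide:
  assumes sat: "\<forall>x. poly_map x \<longrightarrow> (\<lambda>v. Q v *\<^sub>R x v) \<in> D \<longrightarrow> x \<in> D"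
    and z: "z \<in> D" and dvd: "\<And>b. b \<in> Basis \<Longrightarrow> poly_dvd Q (\<lambda>v. z v \<bullet> b)"
  obtains y where "y \<in> D" "\<And>v. z v = Q v *\<^sub>R y v"
proof -
  obtain c where c: "\<And>b. b \<in> Basis \<Longrightarrow> poly_fun (c b) \<and> (\<forall>v. z v \<bullet> b = Q v * c b v)"
    using dvd unfolding poly_dvd_def by metis
  define y where "y v = (\<Sum>b\<in>Basis. c b v *\<^sub>R b)" for v
  have y_inner: "y v \<bullet> b = c b v" if "b \<in> Basis" for v b
    unfolding y_def using that by (rule inner_sum_left_Basis)
  have zy: "z v = Q v *\<^sub>R y v" for v
    by (rule euclidean_eqI) (simp add: y_inner c)
  have "poly_map y" unfolding poly_map_def using y_inner c by simp
  with sat z zy have "y \<in> D" by (metis (no_types, lifting) ext)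
  with zy show thesis using that by blast
qed

lemma det_coord_mat_in_minor_ideal:
  assumes "selection r Basis \<sigma>"
  shows "(\<lambda>v. det (coord_mat r xs \<sigma> v)) \<in> minor_ideal r xs"
proof -
  have "(\<lambda>v. det_nat r (\<lambda>i j. xs j v \<bullet> \<sigma> i)) \<in> minors r xs"
    using assms unfolding minors_def selection_def by blast
  then have "(\<lambda>v. det_nat r (\<lambda>i j. xs j v \<bullet> \<sigma> i)) \<in> minor_ideal r xs"
    unfolding minor_ideal_def ideal_gen_def
    by (intro CollectI exI[of _ 1] exI[of _ "\<lambda>i v. 1"]
        exI[of _ "\<lambda>i v. det_nat r (\<lambda>i j. xs j v \<bullet> \<sigma> i)"]) (auto intro: poly_fun.const)
  then show ?thesis by (simp add: det_nat_eq_det_coord_mat)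
qed

lemma minor_ideal_not_subset_multiples:
  assumes "selection r Basis \<sigma>" "\<not> poly_dvd Q (\<lambda>v. det (coord_mat r xs \<sigma> v))"
  shows "\<not> minor_ideal r xs \<subseteq> {(\<lambda>v. Q v * f v) | f. poly_fun f}"
proof
  assume "minor_ideal r xs \<subseteq> {(\<lambda>v. Q v * f v) | f. poly_fun f}"
  then obtain f where "poly_fun f" "(\<lambda>v. det (coord_mat r xs \<sigma> v)) = (\<lambda>v. Q v * f v)"
    using det_coord_mat_in_minor_ideal[OF assms(1)] by blast
  then have "poly_dvd Q (\<lambda>v. det (coord_mat r xs \<sigma> v))"
    unfolding poly_dvd_def by (intro exI[of _ f]) (simp add: fun_eq_iff)
  with assms(2) show False ..
qed

lemma exists_nonzero_minor:
  assumes "minor_ideal r xs \<noteq> {\<lambda>v. 0}"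
  obtains \<sigma> v where "selection r Basis \<sigma>" "det (coord_mat r xs \<sigma> v) \<noteq> 0"
proof -
  have "\<exists>\<sigma> v. selection r Basis \<sigma> \<and> det (coord_mat r xs \<sigma> v) \<noteq> 0"
  proof (rule ccontr)
    assume "\<not> ?thesis"
    then have zero: "g v = 0" if "g \<in> minors r xs" for g v
      using that unfolding minors_def selection_def by (auto simp: det_nat_eq_det_coord_mat)
    have "minor_ideal r xs \<subseteq> {\<lambda>v. 0}"
    proof
      fix m assume "m \<in> minor_ideal r xs"
      then obtain n :: nat and f g where "m = (\<lambda>v. \<Sum>i<n. f i v * g i v)"
        and "\<forall>i<n. g i \<in> minors r xs"
        unfolding minor_ideal_def ideal_gen_def by blast
      moreover have "g i v = 0" if "i < n" for i v
        using zero \<open>\<forall>i<n. g i \<in> minors r xs\<close> that by blast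
      ultimately show "m \<in> {\<lambda>v. 0}" by simp
    qed
    moreover have "(\<lambda>v. 0) \<in> minor_ideal r xs"
      unfolding minor_ideal_def ideal_gen_def by (intro CollectI exI[of _ 0]) simp
    ultimately show False using assms by blast
  qed
  then show thesis using that by blast
qed

lemma exists_maximal_nondivisible_minor:
  assumes unit: "\<not> poly_dvd Q (\<lambda>v. 1)"
    and all_dvd: "\<forall>\<sigma>. selection r Basis \<sigma> \<longrightarrow> poly_dvd Q (\<lambda>v. det (coord_mat r xs \<sigma> v))"
  obtains \<rho> \<tau> \<sigma> where "\<rho> < r" "selection \<rho> {..<r} \<tau>" "selection \<rho> Basis \<sigma>"
    "\<not> poly_dvd Q (\<lambda>v. det (coord_mat \<rho> (xs \<circ> \<tau>) \<sigma> v))"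
    "\<And>\<tau>' \<sigma>'. selection (Suc \<rho>) {..<r} \<tau>' \<Longrightarrow> selection (Suc \<rho>) Basis \<sigma>' \<Longrightarrow>
       poly_dvd Q (\<lambda>v. det (coord_mat (Suc \<rho>) (xs \<circ> \<tau>') \<sigma>' v))"
proof -
  define S where "S = {m. m \<le> r \<and> (\<exists>\<tau> \<sigma>. selection m {..<r} \<tau> \<and> selection m Basis \<sigma> \<and>
    \<not> poly_dvd Q (\<lambda>v. det (coord_mat m (xs \<circ> \<tau>) \<sigma> v)))}"
  have "(\<lambda>v. det (coord_mat 0 ys \<sigma> v)) = (\<lambda>v. 1)" for ys \<sigma> by (simp add: coord_mat_def)
  then have "0 \<in> S" using unit unfolding S_def selection_def by auto
  have "finite S" unfolding S_def by (rule finite_subset[of _ "{..r}"]) auto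
  define \<rho> where "\<rho> = Max S"
  have "\<rho> \<in> S" unfolding \<rho>_def using \<open>finite S\<close> \<open>0 \<in> S\<close> by (intro Max_in) auto
  then obtain \<tau> \<sigma> where "\<rho> \<le> r" and \<tau>: "selection \<rho> {..<r} \<tau>" and \<sigma>: "selection \<rho> Basis \<sigma>"
    and not_dvd: "\<not> poly_dvd Q (\<lambda>v. det (coord_mat \<rho> (xs \<circ> \<tau>) \<sigma> v))"
    unfolding S_def by blast
  have "\<rho> \<noteq> r"
  proof
    assume "\<rho> = r"
    with \<tau> have "selection r {..<r} \<tau>" by simp
    then obtain c where "\<And>v. det (coord_mat r (xs \<circ> \<tau>) \<sigma> v) = c * det (coord_mat r xs \<sigma> v)"
      using det_coord_mat_permute_rows[where xs = xs and \<sigma> = \<sigma>] by blast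
    moreover have "poly_dvd Q (\<lambda>v. c * det (coord_mat r xs \<sigma> v))"
      using all_dvd \<sigma> \<open>\<rho> = r\<close> by (intro poly_dvd_mult_left poly_fun.const) auto
    ultimately show False using not_dvd \<open>\<rho> = r\<close> by simp
  qed
  have "poly_dvd Q (\<lambda>v. det (coord_mat (Suc \<rho>) (xs \<circ> \<tau>') \<sigma>' v))"
    if "selection (Suc \<rho>) {..<r} \<tau>'" "selection (Suc \<rho>) Basis \<sigma>'" for \<tau>' \<sigma>'
  proof (rule ccontr)
    assume "\<not> ?thesis"
    with that \<open>\<rho> \<le> r\<close> \<open>\<rho> \<noteq> r\<close> have "Suc \<rho> \<in> S" unfolding S_def by auto
    then show False using \<open>finite S\<close> \<rho>_def by (metis Max_ge Suc_n_not_le_n)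
  qed
  with \<open>\<rho> \<le> r\<close> \<open>\<rho> \<noteq> r\<close> \<tau> \<sigma> not_dvd show thesis by (intro that) auto
qed

lemma poly_dvd_inner_cofactor_combination:
  assumes \<beta>: "selection n Basis \<beta>" and "b \<in> Basis"
    and maximal: "\<And>\<sigma>. selection (Suc n) Basis \<sigma> \<Longrightarrow>
      poly_dvd Q (\<lambda>v. det (coord_mat (Suc n) xs \<sigma> v))"
  shows "poly_dvd Q (\<lambda>v. (\<Sum>k<Suc n. cofactor (coord_mat (Suc n) xs \<beta> v) k n *\<^sub>R xs k v) \<bullet> b)"
  unfolding inner_sum_cofactor_column
proof (cases "b \<in> \<beta> ` {..<n}")
  case True
  then obtain i where "i < n" "b = \<beta> i" by blast
  then have "(\<lambda>v. det (coord_mat (Suc n) xs (\<beta>(n := b)) v)) = (\<lambda>v. 0)"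
    unfolding \<open>b = \<beta> i\<close> by (intro ext det_coord_mat_repeated_column \<open>i < n\<close>)
  then show "poly_dvd Q (\<lambda>v. det (coord_mat (Suc n) xs (\<beta>(n := b)) v))"
    by (simp add: poly_dvd_zero)
next
  case False
  with \<beta> \<open>b \<in> Basis\<close> have "selection (Suc n) Basis (\<beta>(n := b))" by (intro selection_Suc_upd)
  then show "poly_dvd Q (\<lambda>v. det (coord_mat (Suc n) xs (\<beta>(n := b)) v))" by (rule maximal)
qed

lemma exists_row_exchange:
  assumes unit: "\<not> poly_dvd Q (\<lambda>v. 1)" and D: "poly_submodule D"
    and sat: "\<forall>x. poly_map x \<longrightarrow> (\<lambda>v. Q v *\<^sub>R x v) \<in> D \<longrightarrow> x \<in> D"
    and xs: "\<forall>i<r. xs i \<in> D"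
    and all_dvd: "\<forall>\<sigma>. selection r Basis \<sigma> \<longrightarrow> poly_dvd Q (\<lambda>v. det (coord_mat r xs \<sigma> v))"
  obtains j y a where "j < r" "y \<in> D" "poly_fun a" "\<not> poly_dvd Q a"
    "\<And>\<sigma> v. Q v * det (coord_mat r (xs(j := y)) \<sigma> v) = a v * det (coord_mat r xs \<sigma> v)"
proof -
  obtain \<rho> \<tau> \<beta> where "\<rho> < r" and \<tau>: "selection \<rho> {..<r} \<tau>" and \<beta>: "selection \<rho> Basis \<beta>"
    and not_dvd: "\<not> poly_dvd Q (\<lambda>v. det (coord_mat \<rho> (xs \<circ> \<tau>) \<beta> v))"
    and maximal: "\<And>\<tau>' \<sigma>'. selection (Suc \<rho>) {..<r} \<tau>' \<Longrightarrow> selection (Suc \<rho>) Basis \<sigma>' \<Longrightarrow>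
       poly_dvd Q (\<lambda>v. det (coord_mat (Suc \<rho>) (xs \<circ> \<tau>') \<sigma>' v))"
    using exists_maximal_nondivisible_minor[OF unit all_dvd] by blast
  obtain j where j: "j < r" "j \<notin> \<tau> ` {..<\<rho>}"
    using exists_lessThan_notin_image[OF \<open>\<rho> < r\<close>] by blast
  define \<tau>' where "\<tau>' = \<tau>(\<rho> := j)"
  have \<tau>': "selection (Suc \<rho>) {..<r} \<tau>'"
    unfolding \<tau>'_def using \<tau> j by (intro selection_Suc_upd) auto
  have rows_in_D: "k < Suc \<rho> \<Longrightarrow> (xs \<circ> \<tau>') k \<in> D" for k
    using \<tau>' xs unfolding selection_def by auto
  define c where "c k v = cofactor (coord_mat (Suc \<rho>) (xs \<circ> \<tau>') \<beta> v) k \<rho>" for k v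
  have c_poly: "poly_fun (c k)" for k
    unfolding c_def[abs_def] using rows_in_D
    by (intro poly_fun_cofactor_coord_mat poly_submodule_poly_map[OF D])
  have c_last: "c \<rho> = (\<lambda>v. det (coord_mat \<rho> (xs \<circ> \<tau>) \<beta> v))"
    unfolding c_def[abs_def] \<tau>'_def by (simp add: cofactor_coord_mat_last comp_def)
  define z where "z v = (\<Sum>k<Suc \<rho>. c k v *\<^sub>R xs (\<tau>' k) v)" for v
  have "z \<in> D"
    unfolding z_def[abs_def] using c_poly rows_in_D by (intro poly_submodule_sum[OF D]) auto
  have "poly_dvd Q (\<lambda>v. z v \<bullet> b)" if "b \<in> Basis" for b
    using poly_dvd_inner_cofactor_combination[OF \<beta> that maximal[OF \<tau>']]
    unfolding z_def c_def by simp
  then obtain y where "y \<in> D" and z_eq: "z = (\<lambda>v. Q v *\<^sub>R y v)"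
    using saturated_divide[OF sat \<open>z \<in> D\<close>] by (metis ext)
  show thesis
  proof (rule that[OF j(1) \<open>y \<in> D\<close> c_poly])
    show "\<not> poly_dvd Q (c \<rho>)" using not_dvd c_last by simp
    fix \<sigma> v
    have "Q v * det (coord_mat r (xs(j := y)) \<sigma> v) = det (coord_mat r (xs(j := z)) \<sigma> v)"
      unfolding z_eq det_coord_mat_upd_scaleR[OF j(1)] ..
    also have "\<dots> = c \<rho> v * det (coord_mat r xs \<sigma> v)"
      unfolding z_def[abs_def] using \<tau> j unfolding selection_def \<tau>'_def
      by (intro det_coord_mat_upd_combination[OF j(1)]) (auto simp: image_subset_iff)
    finally show "Q v * det (coord_mat r (xs(j := y)) \<sigma> v) = c \<rho> v * det (coord_mat r xs \<sigma> v)" .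
  qed
qed

lemma exists_nondivisible_minor:
  fixes Q :: "'v::euclidean_space \<Rightarrow> real"
  assumes Q: "poly_prime Q" and D: "poly_submodule D"
    and sat: "\<forall>x. poly_map x \<longrightarrow> (\<lambda>v. Q v *\<^sub>R x v) \<in> D \<longrightarrow> x \<in> D"
    and xs: "\<forall>i<r. xs i \<in> D" and \<sigma>: "selection r Basis \<sigma>"
    and h: "poly_fun h" "\<not> poly_dvd Q h" and M: "\<And>v. det (coord_mat r xs \<sigma> v) = Q v ^ k * h v"
  shows "\<exists>xs \<sigma>. (\<forall>i<r. xs i \<in> D) \<and> selection r Basis \<sigma> \<and>
    \<not> poly_dvd Q (\<lambda>v. det (coord_mat r xs \<sigma> v))"
  using xs h M
proof (induction k arbitrary: xs h)
  case 0
  then have "(\<lambda>v. det (coord_mat r xs \<sigma> v)) = h" by (simp add: fun_eq_iff)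
  then have "\<not> poly_dvd Q (\<lambda>v. det (coord_mat r xs \<sigma> v))" using 0 by simp
  with 0 \<sigma> show ?case by blast
next
  case (Suc k)
  show ?case
  proof (cases "\<forall>\<sigma>. selection r Basis \<sigma> \<longrightarrow> poly_dvd Q (\<lambda>v. det (coord_mat r xs \<sigma> v))")
    case False
    with Suc.prems(1) show ?thesis by blast
  next
    case True
    obtain u where Q_poly: "poly_fun Q" and "Q u \<noteq> 0" and unit: "\<not> poly_dvd Q (\<lambda>v. 1)"
      and prime: "\<And>f g. poly_fun f \<Longrightarrow> poly_fun g \<Longrightarrow> poly_dvd Q (\<lambda>v. f v * g v) \<Longrightarrow>
        poly_dvd Q f \<or> poly_dvd Q g"
      using Q unfolding poly_prime_def by blast
    obtain j y a where "j < r" "y \<in> D" "poly_fun a" "\<not> poly_dvd Q a"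
      and exchange: "\<And>\<sigma> v. Q v * det (coord_mat r (xs(j := y)) \<sigma> v) =
        a v * det (coord_mat r xs \<sigma> v)"
      by (rule exists_row_exchange[OF unit D sat Suc.prems(1) True]) iprover
    have xs': "\<forall>i<r. (xs(j := y)) i \<in> D" using Suc.prems(1) \<open>y \<in> D\<close> by simp
    have det_eq: "(\<lambda>v. det (coord_mat r (xs(j := y)) \<sigma> v)) = (\<lambda>v. Q v ^ k * (a v * h v))"
    proof (rule poly_fun_mult_left_cancel[OF Q_poly \<open>Q u \<noteq> 0\<close>])
      show "poly_fun (\<lambda>v. det (coord_mat r (xs(j := y)) \<sigma> v))"
        using xs' by (intro poly_fun_det_coord_mat poly_submodule_poly_map[OF D]) simp
      show "poly_fun (\<lambda>v. Q v ^ k * (a v * h v))"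
        using Q_poly \<open>poly_fun a\<close> Suc.prems(2) by (intro poly_fun.mult poly_fun_power)
      show "Q v * det (coord_mat r (xs(j := y)) \<sigma> v) = Q v * (Q v ^ k * (a v * h v))" for v
        unfolding exchange Suc.prems(4) by (simp add: algebra_simps)
    qed
    have "\<not> poly_dvd Q (\<lambda>v. a v * h v)"
      using prime[OF \<open>poly_fun a\<close> Suc.prems(2)] \<open>\<not> poly_dvd Q a\<close> Suc.prems(3) by blast
    then show ?thesis
      using Suc.IH[of "xs(j := y)" "\<lambda>v. a v * h v"] xs' poly_fun.mult[OF \<open>poly_fun a\<close> Suc.prems(2)]
        fun_cong[OF det_eq] by blast
  qed
qed

theorem lemma3p6:
  fixes B :: "'v::euclidean_space \<Rightarrow> 'v \<Rightarrow> real"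
    and p q r :: nat
    and D :: "('v \<Rightarrow> 'w::euclidean_space) set"
  assumes sig: "has_signature B p q"
    and pq: "p \<ge> 1" "q \<ge> 1" "p + q \<ge> 3"
    and r: "r \<le> DIM('w)"
    and D: "poly_submodule D"
    and sat: "\<forall>x. poly_map x \<longrightarrow> (\<lambda>v. B v v *\<^sub>R x v) \<in> D \<longrightarrow> x \<in> D"
    and ex: "\<exists>xs. (\<forall>i<r. xs i \<in> D) \<and> minor_ideal r xs \<noteq> {\<lambda>v. 0}"
  shows "\<exists>xs. (\<forall>i<r. xs i \<in> D) \<and>
           \<not> (minor_ideal r xs \<subseteq> {(\<lambda>v. B v v * f v) | f. poly_fun f})"
proof -
  have bil: "bilinear B" and sym: "\<And>u v. B u v = B v u" and "\<exists>e::nat \<Rightarrow> 'v. B (e 0) (e 0) = 1"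
    using sig pq(1) unfolding has_signature_def by auto
  then obtain e where e: "B e e = 1" by blast
  obtain xs where xs: "\<forall>i<r. xs i \<in> D" and "minor_ideal r xs \<noteq> {\<lambda>v. 0}" using ex by blast
  from this(2) obtain \<sigma> v0 where \<sigma>: "selection r Basis \<sigma>" and "det (coord_mat r xs \<sigma> v0) \<noteq> 0"
    by (rule exists_nonzero_minor)
  moreover have "poly_fun (\<lambda>v. det (coord_mat r xs \<sigma> v))"
    using xs by (intro poly_fun_det_coord_mat poly_submodule_poly_map[OF D]) simp
  ultimately obtain k h where "poly_fun h" "\<not> poly_dvd (\<lambda>v. B v v) h"
    "\<forall>v. det (coord_mat r xs \<sigma> v) = B v v ^ k * h v"
    using exists_quadratic_form_power_factor[OF bil sym e] by blast
  then obtain xs' \<sigma>' where "\<forall>i<r. xs' i \<in> D" "selection r Basis \<sigma>'"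
    "\<not> poly_dvd (\<lambda>v. B v v) (\<lambda>v. det (coord_mat r xs' \<sigma>' v))"
    using exists_nondivisible_minor[OF poly_prime_quadratic_form[OF sig pq] D sat xs \<sigma>] by blast
  then show ?thesis using minor_ideal_not_subset_multiples by blast
qed

end
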